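(* Let $\mathcal{P}=\{X_i\mid i\in I\}$ be a partition of a set $X$. Then the quotient semigroup $\Sigma(X,\mathcal{P})/\chi$ is isomorphic to the semigroup of all surjective maps $I\to I$ (under composition).
   Context: Maps are written on the right and composed left to right ($x(fg)=(xf)g$). $T(X,\mathcal{P})=\{f\colon X\to X\mid \forall i\ \exists j:\ X_if\subseteq X_j\}$ (distinct indices for distinct blocks) and $\Sigma(X,\mathcal{P})=\{f\in T(X,\mathcal{P})\mid Xf\cap X_i\neq\emptyset\ \forall i\in I\}$, a subsemigroup. For $f\in T(X,\mathcal{P})$, $\chi^{(f)}\colon I\to I$ is defined by $i\chi^{(f)}=j$ whenever $X_if\subseteq X_j$. The relation $\chi$ on $\Sigma(X,\mathcal{P})$ defined by $(f,g)\in\chi\iff\chi^{(f)}=\chi^{(g)}$ is a congruence, and $\Sigma(X,\mathcal{P})/\chi$ is the corresponding quotient semigroup with $[f][g]=[fg]$. *)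

theory Defs
  imports "HOL-Algebra.Group" "HOL-Library.FuncSet"
begin

definition is_partition :: "'a set \<Rightarrow> ('i \<Rightarrow> 'a set) \<Rightarrow> 'i set \<Rightarrow> bool" where
  "is_partition X Xb I \<longleftrightarrow>
     (\<forall>i\<in>I. Xb i \<noteq> {}) \<and>
     (\<forall>i\<in>I. \<forall>j\<in>I. i \<noteq> j \<longrightarrow> Xb i \<inter> Xb j = {}) \<and>
     \<Union>(Xb ` I) = X"

text \<open>Maps are written on the right: x(fg) = (xf)g. Maps X -> X are represented
  extensionally (undefined outside X).\<close>
definition rcomp :: "'a set \<Rightarrow> ('a \<Rightarrow> 'a) \<Rightarrow> ('a \<Rightarrow> 'a) \<Rightarrow> ('a \<Rightarrow> 'a)" where
  "rcomp X f g = (\<lambda>x\<in>X. g (f x))"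

definition T_part :: "'a set \<Rightarrow> ('i \<Rightarrow> 'a set) \<Rightarrow> 'i set \<Rightarrow> ('a \<Rightarrow> 'a) set" where
  "T_part X Xb I = {f \<in> X \<rightarrow>\<^sub>E X. \<forall>i\<in>I. \<exists>j\<in>I. f ` Xb i \<subseteq> Xb j}"

definition Sigma_part :: "'a set \<Rightarrow> ('i \<Rightarrow> 'a set) \<Rightarrow> 'i set \<Rightarrow> ('a \<Rightarrow> 'a) set" where
  "Sigma_part X Xb I = {f \<in> T_part X Xb I. \<forall>i\<in>I. f ` X \<inter> Xb i \<noteq> {}}"

definition chi_map :: "('i \<Rightarrow> 'a set) \<Rightarrow> 'i set \<Rightarrow> ('a \<Rightarrow> 'a) \<Rightarrow> ('i \<Rightarrow> 'i)" where
  "chi_map Xb I f = (\<lambda>i\<in>I. THE j. j \<in> I \<and> f ` Xb i \<subseteq> Xb j)"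

definition chi_rel :: "'a set \<Rightarrow> ('i \<Rightarrow> 'a set) \<Rightarrow> 'i set \<Rightarrow> (('a \<Rightarrow> 'a) \<times> ('a \<Rightarrow> 'a)) set" where
  "chi_rel X Xb I = {(f, g). f \<in> Sigma_part X Xb I \<and> g \<in> Sigma_part X Xb I \<and>
                             chi_map Xb I f = chi_map Xb I g}"

text \<open>The quotient semigroup Sigma(X,P)/chi, with [f][g] = [fg].  The unit field is
  irrelevant (only the multiplication is used by hom/iso).\<close>
definition Sigma_quot :: "'a set \<Rightarrow> ('i \<Rightarrow> 'a set) \<Rightarrow> 'i set \<Rightarrow> ('a \<Rightarrow> 'a) set monoid" where
  "Sigma_quot X Xb I =
     \<lparr> carrier = Sigma_part X Xb I // chi_rel X Xb I,
       mult = (\<lambda>A B. \<Union>{chi_rel X Xb I `` {rcomp X f g} | f g. f \<in> A \<and> g \<in> B}),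
       one = undefined \<rparr>"

definition Surj_sg :: "'i set \<Rightarrow> ('i \<Rightarrow> 'i) monoid" where
  "Surj_sg I =
     \<lparr> carrier = {\<alpha> \<in> I \<rightarrow>\<^sub>E I. \<alpha> ` I = I},
       mult = (\<lambda>\<alpha> \<beta>. \<lambda>i\<in>I. \<beta> (\<alpha> i)),
       one = undefined \<rparr>"

end

theory Submission
  imports Defs
begin

text \<open>The map \<open>f \<mapsto> \<chi>\<^sup>f\<close> turns composition of maps into composition of
  index maps, and \<open>f\<close> meets every block exactly when \<open>\<chi>\<^sup>f\<close> is surjective; every
  surjection \<open>\<alpha>\<close> is realised by sending all of \<open>X\<^sub>i\<close> to one chosen point of
  \<open>X\<^bsub>\<alpha> i\<^esub>\<close>. So \<open>\<chi>\<close> is the kernel of a surjective homomorphism from \<open>\<Sigma>(X,\<P>)\<close>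
  onto the surjections of \<open>I\<close>, and the quotient by a kernel is isomorphic to the image.\<close>

lemma iso_quotient_by_kernel:
  fixes Q :: "('a set, 'z) monoid_scheme" and M :: "('b, 'w) monoid_scheme"
  assumes R: "R = {(f, g). f \<in> S \<and> g \<in> S \<and> \<phi> f = \<phi> g}"
    and carrier_Q: "carrier Q = S // R"
    and mult_Q: "\<And>A B. A \<otimes>\<^bsub>Q\<^esub> B = \<Union>{R `` {mul f g} | f g. f \<in> A \<and> g \<in> B}"
    and closed: "\<And>f g. f \<in> S \<Longrightarrow> g \<in> S \<Longrightarrow> mul f g \<in> S"
    and hom: "\<And>f g. f \<in> S \<Longrightarrow> g \<in> S \<Longrightarrow> \<phi> (mul f g) = \<phi> f \<otimes>\<^bsub>M\<^esub> \<phi> g"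
    and onto: "\<phi> ` S = carrier M"
  shows "Q \<cong> M"
proof -
  have kernel_class: "R `` {f} = {g \<in> S. \<phi> g = \<phi> f}" if "f \<in> S" for f
    using that R by auto
  have value_class: "the_elem (\<phi> ` (R `` {f})) = \<phi> f" if "f \<in> S" for f
  proof -
    have "\<phi> ` (R `` {f}) = {\<phi> f}" using kernel_class[OF that] that by auto
    then show ?thesis by simp
  qed
  have mult_class: "R `` {f} \<otimes>\<^bsub>Q\<^esub> R `` {g} = R `` {mul f g}" if "f \<in> S" "g \<in> S" for f g
  proof -
    have "R `` {mul f' g'} = R `` {mul f g}" if "f' \<in> R `` {f}" "g' \<in> R `` {g}" for f' g'
      using that kernel_class \<open>f \<in> S\<close> \<open>g \<in> S\<close> closed hom by auto
    moreover have "f \<in> R `` {f}" "g \<in> R `` {g}" using kernel_class that by auto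
    ultimately have "{R `` {mul f' g'} | f' g'. f' \<in> R `` {f} \<and> g' \<in> R `` {g}} = {R `` {mul f g}}"
      by blast
    then show ?thesis using mult_Q by simp
  qed
  let ?h = "\<lambda>A. the_elem (\<phi> ` A)"
  have "?h \<in> hom Q M"
  proof (rule homI)
    fix A assume "A \<in> carrier Q"
    then obtain f where "f \<in> S" "A = R `` {f}" using carrier_Q by (auto elim!: quotientE)
    then show "?h A \<in> carrier M" using value_class onto by auto
  next
    fix A B assume "A \<in> carrier Q" "B \<in> carrier Q"
    then obtain f g where "f \<in> S" "A = R `` {f}" "g \<in> S" "B = R `` {g}"
      using carrier_Q by (auto elim!: quotientE)
    then show "?h (A \<otimes>\<^bsub>Q\<^esub> B) = ?h A \<otimes>\<^bsub>M\<^esub> ?h B"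
      using mult_class value_class closed hom by simp
  qed
  moreover have "bij_betw ?h (carrier Q) (carrier M)"
  proof (rule bij_betw_imageI)
    show "inj_on ?h (carrier Q)"
    proof (rule inj_onI)
      fix A B assume "A \<in> carrier Q" "B \<in> carrier Q" "?h A = ?h B"
      then obtain f g where "f \<in> S" "A = R `` {f}" "g \<in> S" "B = R `` {g}" "\<phi> f = \<phi> g"
        using carrier_Q value_class by (auto elim!: quotientE)
      then show "A = B" using kernel_class by simp
    qed
    have "carrier Q = (\<lambda>f. R `` {f}) ` S" using carrier_Q by (auto simp: quotient_def)
    then show "?h ` carrier Q = carrier M"
      using value_class onto by (simp add: image_image)
  qed
  ultimately show ?thesis unfolding is_iso_def iso_def by blast
qed

locale indexed_partition =
  fixes X :: "'a set" and Xb :: "'i \<Rightarrow> 'a set" and I :: "'i set"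
  assumes partition: "is_partition X Xb I"
begin

lemma block_nonempty: "i \<in> I \<Longrightarrow> Xb i \<noteq> {}"
  using partition unfolding is_partition_def by blast

lemma block_eq: "i \<in> I \<Longrightarrow> j \<in> I \<Longrightarrow> x \<in> Xb i \<Longrightarrow> x \<in> Xb j \<Longrightarrow> i = j"
  using partition unfolding is_partition_def by blast

lemma block_subset: "i \<in> I \<Longrightarrow> Xb i \<subseteq> X"
  using partition unfolding is_partition_def by blast

lemma ex_block: "x \<in> X \<Longrightarrow> \<exists>i\<in>I. x \<in> Xb i"
  using partition unfolding is_partition_def by blast

lemma chi_map_eq:
  assumes "i \<in> I" "j \<in> I" "f ` Xb i \<subseteq> Xb j"
  shows "chi_map Xb I f i = j"
proof -
  have unique: "k = j" if "k \<in> I" "f ` Xb i \<subseteq> Xb k" for k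
  proof -
    obtain x where "x \<in> Xb i" using block_nonempty \<open>i \<in> I\<close> by blast
    then have "f x \<in> Xb k" "f x \<in> Xb j" using that assms by blast+
    then show "k = j" using block_eq \<open>k \<in> I\<close> \<open>j \<in> I\<close> by blast
  qed
  have "(THE k. k \<in> I \<and> f ` Xb i \<subseteq> Xb k) = j"
  proof (rule the_equality)
    show "j \<in> I \<and> f ` Xb i \<subseteq> Xb j" using assms by simp
  qed (use unique in blast)
  then show ?thesis unfolding chi_map_def using \<open>i \<in> I\<close> by simp
qed

lemma chi_map_in_blocks:
  assumes "f \<in> T_part X Xb I" "i \<in> I"
  shows "chi_map Xb I f i \<in> I" "f ` Xb i \<subseteq> Xb (chi_map Xb I f i)"
proof -
  obtain j where "j \<in> I" "f ` Xb i \<subseteq> Xb j" using assms unfolding T_part_def by blast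
  with chi_map_eq \<open>i \<in> I\<close> show "chi_map Xb I f i \<in> I" "f ` Xb i \<subseteq> Xb (chi_map Xb I f i)"
    by simp_all
qed

lemma chi_map_eq_point:
  assumes "f \<in> T_part X Xb I" "i \<in> I" "j \<in> I" "x \<in> Xb i" "f x \<in> Xb j"
  shows "chi_map Xb I f i = j"
proof -
  have "f x \<in> Xb (chi_map Xb I f i)" using chi_map_in_blocks(2)[OF assms(1,2)] assms(4) by blast
  then show ?thesis using block_eq chi_map_in_blocks(1)[OF assms(1,2)] assms(3,5) by blast
qed

lemma chi_map_PiE: "f \<in> T_part X Xb I \<Longrightarrow> chi_map Xb I f \<in> I \<rightarrow>\<^sub>E I"
  using chi_map_in_blocks by (auto simp: chi_map_def)

lemma Sigma_part_iff_surj_chi_map: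
  assumes f: "f \<in> T_part X Xb I"
  shows "f \<in> Sigma_part X Xb I \<longleftrightarrow> chi_map Xb I f ` I = I"
proof
  assume "f \<in> Sigma_part X Xb I"
  have "k \<in> chi_map Xb I f ` I" if "k \<in> I" for k
  proof -
    obtain x where "x \<in> X" "f x \<in> Xb k"
      using \<open>f \<in> Sigma_part X Xb I\<close> \<open>k \<in> I\<close> unfolding Sigma_part_def by blast
    moreover obtain i where "i \<in> I" "x \<in> Xb i" using ex_block \<open>x \<in> X\<close> by blast
    ultimately show ?thesis using chi_map_eq_point[OF f] \<open>k \<in> I\<close> by (metis image_eqI)
  qed
  then show "chi_map Xb I f ` I = I" using chi_map_PiE f by auto
next
  assume surj: "chi_map Xb I f ` I = I"
  have "f ` X \<inter> Xb k \<noteq> {}" if "k \<in> I" for k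
  proof -
    obtain i where "i \<in> I" "k = chi_map Xb I f i" using surj \<open>k \<in> I\<close> by blast
    moreover obtain x where "x \<in> Xb i" using block_nonempty \<open>i \<in> I\<close> by blast
    ultimately have "f x \<in> Xb k" "x \<in> X"
      using chi_map_in_blocks(2)[OF f] block_subset by blast+
    then show ?thesis by blast
  qed
  then show "f \<in> Sigma_part X Xb I" using f unfolding Sigma_part_def by blast
qed

lemma rcomp_block:
  assumes "f \<in> T_part X Xb I" "g \<in> T_part X Xb I" "i \<in> I"
  shows "rcomp X f g ` Xb i \<subseteq> Xb (chi_map Xb I g (chi_map Xb I f i))"
  using chi_map_in_blocks[OF assms(1,3)] chi_map_in_blocks(2)[OF assms(2)] block_subset[OF assms(3)]
  unfolding rcomp_def by fastforce

lemma rcomp_T_part: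
  assumes "f \<in> T_part X Xb I" "g \<in> T_part X Xb I"
  shows "rcomp X f g \<in> T_part X Xb I"
proof -
  have "rcomp X f g \<in> X \<rightarrow>\<^sub>E X" using assms unfolding T_part_def rcomp_def by auto
  moreover have "chi_map Xb I g (chi_map Xb I f i) \<in> I" if "i \<in> I" for i
    using chi_map_in_blocks(1) assms that by blast
  ultimately show ?thesis unfolding T_part_def using rcomp_block[OF assms] by blast
qed

lemma chi_map_rcomp:
  assumes "f \<in> T_part X Xb I" "g \<in> T_part X Xb I"
  shows "chi_map Xb I (rcomp X f g) = (\<lambda>i\<in>I. chi_map Xb I g (chi_map Xb I f i))"
proof
  fix i show "chi_map Xb I (rcomp X f g) i = (\<lambda>i\<in>I. chi_map Xb I g (chi_map Xb I f i)) i"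
  proof (cases "i \<in> I")
    case True
    then have "chi_map Xb I g (chi_map Xb I f i) \<in> I" using chi_map_in_blocks(1) assms by blast
    with True show ?thesis using chi_map_eq[OF True _ rcomp_block[OF assms True]] by simp
  qed (simp add: chi_map_def)
qed

lemma rcomp_Sigma_part:
  assumes "f \<in> Sigma_part X Xb I" "g \<in> Sigma_part X Xb I"
  shows "rcomp X f g \<in> Sigma_part X Xb I"
proof -
  have T: "f \<in> T_part X Xb I" "g \<in> T_part X Xb I" using assms unfolding Sigma_part_def by auto
  have "chi_map Xb I (rcomp X f g) ` I = chi_map Xb I g ` chi_map Xb I f ` I"
    using chi_map_rcomp[OF T] by (simp add: image_image)
  also have "\<dots> = I" using assms T Sigma_part_iff_surj_chi_map by simp
  finally show ?thesis using Sigma_part_iff_surj_chi_map rcomp_T_part[OF T] by blast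
qed

lemma ex_T_part_chi_map:
  assumes \<alpha>: "\<alpha> \<in> I \<rightarrow>\<^sub>E I"
  shows "\<exists>f \<in> T_part X Xb I. chi_map Xb I f = \<alpha>"
proof -
  define block where "block x = (THE i. i \<in> I \<and> x \<in> Xb i)" for x
  define f where "f = (\<lambda>x\<in>X. SOME y. y \<in> Xb (\<alpha> (block x)))"
  have block: "block x = i" if "i \<in> I" "x \<in> Xb i" for i x
    unfolding block_def using that block_eq by (rule_tac the_equality) auto
  have f_block: "f ` Xb i \<subseteq> Xb (\<alpha> i)" if "i \<in> I" for i
  proof (rule image_subsetI)
    fix x assume "x \<in> Xb i"
    have "\<exists>y. y \<in> Xb (\<alpha> i)" using block_nonempty \<alpha> \<open>i \<in> I\<close> by blast
    then have "(SOME y. y \<in> Xb (\<alpha> i)) \<in> Xb (\<alpha> i)" by (rule someI_ex)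
    moreover have "f x = (SOME y. y \<in> Xb (\<alpha> i))"
      using block[OF that \<open>x \<in> Xb i\<close>] block_subset[OF that] \<open>x \<in> Xb i\<close>
      unfolding f_def by auto
    ultimately show "f x \<in> Xb (\<alpha> i)" by simp
  qed
  have "f \<in> X \<rightarrow>\<^sub>E X"
  proof
    fix x assume "x \<in> X"
    then obtain i where "i \<in> I" "x \<in> Xb i" using ex_block by blast
    then show "f x \<in> X" using f_block block_subset \<alpha> by blast
  qed (simp add: f_def)
  then have T: "f \<in> T_part X Xb I" unfolding T_part_def using f_block \<alpha> by blast
  have "chi_map Xb I f = \<alpha>"
  proof
    fix i show "chi_map Xb I f i = \<alpha> i"
    proof (cases "i \<in> I")
      case True
      then show ?thesis using chi_map_eq f_block \<alpha> by blast
    qed (use \<alpha> in \<open>auto simp: chi_map_def\<close>)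
  qed
  with T show ?thesis by blast
qed

lemma chi_map_image_Sigma_part: "chi_map Xb I ` Sigma_part X Xb I = carrier (Surj_sg I)"
proof
  show "chi_map Xb I ` Sigma_part X Xb I \<subseteq> carrier (Surj_sg I)"
    using chi_map_PiE Sigma_part_iff_surj_chi_map
    unfolding Surj_sg_def Sigma_part_def by auto
next
  show "carrier (Surj_sg I) \<subseteq> chi_map Xb I ` Sigma_part X Xb I"
  proof
    fix \<alpha> assume "\<alpha> \<in> carrier (Surj_sg I)"
    then have "\<alpha> \<in> I \<rightarrow>\<^sub>E I" "\<alpha> ` I = I" unfolding Surj_sg_def by auto
    then obtain f where "f \<in> T_part X Xb I" "chi_map Xb I f = \<alpha>" using ex_T_part_chi_map by blast
    then show "\<alpha> \<in> chi_map Xb I ` Sigma_part X Xb I"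
      using Sigma_part_iff_surj_chi_map \<open>\<alpha> ` I = I\<close> by blast
  qed
qed

end

theorem lemma3p8:
  fixes X :: "'a set" and Xb :: "'i \<Rightarrow> 'a set" and I :: "'i set"
  assumes "is_partition X Xb I"
  shows "Sigma_quot X Xb I \<cong> Surj_sg I"
proof -
  interpret indexed_partition X Xb I by (rule indexed_partition.intro) fact
  show ?thesis
  proof (rule iso_quotient_by_kernel)
    show "chi_rel X Xb I = {(f, g). f \<in> Sigma_part X Xb I \<and> g \<in> Sigma_part X Xb I \<and>
                                      chi_map Xb I f = chi_map Xb I g}"
      by (simp add: chi_rel_def)
    show "carrier (Sigma_quot X Xb I) = Sigma_part X Xb I // chi_rel X Xb I"
      by (simp add: Sigma_quot_def)
    show "A \<otimes>\<^bsub>Sigma_quot X Xb I\<^esub> B =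
          \<Union>{chi_rel X Xb I `` {rcomp X f g} | f g. f \<in> A \<and> g \<in> B}" for A B
      by (simp add: Sigma_quot_def)
    show "chi_map Xb I (rcomp X f g) = chi_map Xb I f \<otimes>\<^bsub>Surj_sg I\<^esub> chi_map Xb I g"
      if "f \<in> Sigma_part X Xb I" "g \<in> Sigma_part X Xb I" for f g
      using that chi_map_rcomp by (simp add: Surj_sg_def Sigma_part_def)
  qed (fact rcomp_Sigma_part chi_map_image_Sigma_part)+
qed

end
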